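(* Define, for $u\geq0$, $$\mathcal{J}_\alpha(u)=\begin{cases}\frac{1}{\alpha(\alpha-1)}\Big(\big(1-\frac{1-\alpha}{4\alpha}u\big)_+^\alpha-1\Big)&\alpha\in(0,\tfrac12),\\[3pt]\frac{1}{\alpha(\alpha-1)}\Big(\big(1-\frac{1-\alpha}{2}u\big)_+^\alpha-1\Big)&\alpha\in[\tfrac12,1),\end{cases}$$ $$\mathcal{J}^\flat_\alpha(u)=\begin{cases}\frac{1}{\alpha(\alpha-1)}\Big[\big(1-\frac{(1-\alpha)^2}{2\alpha}u\big)_+^{\frac{\alpha}{2(1-\alpha)}}-1\Big]&\alpha\in(0,\tfrac12),\\[3pt]\frac{1}{\alpha(\alpha-1)}\Big[\big(1-(1-\alpha)^2u\big)_+^{\frac{\alpha}{2(1-\alpha)}}-1\Big]&\alpha\in[\tfrac12,1),\end{cases}$$ where $(s)_+=\max\{s,0\}$. Then for all $\tfrac12\leq\alpha<1$, $\mathcal{J}^\flat_\alpha(u)\leq\mathcal{J}_\alpha(u)$ for all $u\geq0$; and for all $0<\alpha<\tfrac12$, $\mathcal{J}_\alpha(u)\leq\mathcal{J}^\flat_\alpha(u)$ for all $u\geq0$. *)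

theory Defs
  imports Complex_Main
begin

definition pos_part :: "real \<Rightarrow> real" where
  "pos_part s = max s 0"

definition J :: "real \<Rightarrow> real \<Rightarrow> real" where
  "J \<alpha> u =
    (if \<alpha> < 1/2
     then (1 / (\<alpha> * (\<alpha> - 1))) * (pos_part (1 - (1 - \<alpha>) / (4 * \<alpha>) * u) powr \<alpha> - 1)
     else (1 / (\<alpha> * (\<alpha> - 1))) * (pos_part (1 - (1 - \<alpha>) / 2 * u) powr \<alpha> - 1))"

definition Jflat :: "real \<Rightarrow> real \<Rightarrow> real" where
  "Jflat \<alpha> u =
    (if \<alpha> < 1/2
     then (1 / (\<alpha> * (\<alpha> - 1))) *
          (pos_part (1 - (1 - \<alpha>)^2 / (2 * \<alpha>) * u) powr (\<alpha> / (2 * (1 - \<alpha>))) - 1)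
     else (1 / (\<alpha> * (\<alpha> - 1))) *
          (pos_part (1 - (1 - \<alpha>)^2 * u) powr (\<alpha> / (2 * (1 - \<alpha>))) - 1))"

end

theory Submission
  imports Defs "HOL-Analysis.Convex"
begin

text \<open>With \<open>p = 1 / (2 (1 - \<alpha>))\<close> there is, in both regimes, a \<open>y \<ge> 0\<close> such that
  \<open>\<J>\<^sub>\<alpha>\<close> is built from \<open>(1 - p y)\<^sub>+\<^sup>\<alpha>\<close> and \<open>\<J>\<^sup>\<flat>\<^sub>\<alpha>\<close> from \<open>((1 - y)\<^sub>+\<^sup>p)\<^sup>\<alpha>\<close>, both through
  the decreasing map \<open>s \<mapsto> (s - 1) / (\<alpha> (\<alpha> - 1))\<close>. Bernoulli's inequality compares
  \<open>(1 - y)\<^sub>+\<^sup>p\<close> with \<open>(1 - p y)\<^sub>+\<close>; its direction flips with \<open>p \<ge> 1\<close>, i.e. at \<open>\<alpha> = 1/2\<close>.\<close>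

lemma powr_le_tangent_at_one:
  fixes p t :: real
  assumes "0 \<le> p" "p \<le> 1" "0 \<le> t"
  shows "t powr p \<le> 1 + p * (t - 1)"
proof (cases "t = 0")
  case True
  then show ?thesis using assms by simp
next
  case False
  then have "t powr p * 1 powr (1 - p) \<le> p * t + (1 - p) * 1"
    using assms by (intro Youngs_inequality_0) auto
  then show ?thesis by (simp add: algebra_simps)
qed

lemma tangent_at_one_le_powr:
  fixes p t :: real
  assumes "1 \<le> p" "0 \<le> t"
  shows "1 + p * (t - 1) \<le> t powr p"
proof -
  have "t = (t powr p) powr (1 / p)"
    using assms by (simp add: powr_powr)
  also have "\<dots> \<le> 1 + (1 / p) * (t powr p - 1)"
    using assms by (intro powr_le_tangent_at_one) auto
  finally have "p * t \<le> p * (1 + (1 / p) * (t powr p - 1))"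
    using assms by (intro mult_left_mono) auto
  then show ?thesis
    using assms by (simp add: algebra_simps)
qed

lemma pos_part_powr_le_Bernoulli:
  fixes p y :: real
  assumes "0 \<le> p" "p \<le> 1"
  shows "pos_part (1 - y) powr p \<le> pos_part (1 - p * y)"
proof (cases "y \<le> 1")
  case True
  then have "(1 - y) powr p \<le> 1 + p * ((1 - y) - 1)"
    using assms by (intro powr_le_tangent_at_one) auto
  then show ?thesis
    using True by (simp add: pos_part_def algebra_simps)
next
  case False
  then show ?thesis by (simp add: pos_part_def)
qed

lemma Bernoulli_le_pos_part_powr:
  fixes p y :: real
  assumes "1 \<le> p" "0 \<le> y"
  shows "pos_part (1 - p * y) \<le> pos_part (1 - y) powr p"
proof -
  have "p * (1 - y) \<le> p * pos_part (1 - y)"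
    using assms by (intro mult_left_mono) (auto simp: pos_part_def)
  then have "1 - p * y \<le> 1 + p * (pos_part (1 - y) - 1)"
    by (simp add: algebra_simps)
  also have "\<dots> \<le> pos_part (1 - y) powr p"
    using assms by (intro tangent_at_one_le_powr) (auto simp: pos_part_def)
  finally show ?thesis
    by (simp add: pos_part_def)
qed

lemma powr_minus_one_div_antimono:
  fixes \<alpha> s t :: real
  assumes "0 < \<alpha>" "\<alpha> < 1" "0 \<le> s" "s \<le> t"
  shows "1 / (\<alpha> * (\<alpha> - 1)) * (t powr \<alpha> - 1) \<le> 1 / (\<alpha> * (\<alpha> - 1)) * (s powr \<alpha> - 1)"
proof (rule mult_left_mono_neg)
  show "s powr \<alpha> - 1 \<le> t powr \<alpha> - 1"
    using assms by (simp add: powr_mono2)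
  show "1 / (\<alpha> * (\<alpha> - 1)) \<le> 0"
    using assms mult_pos_neg[of \<alpha> "\<alpha> - 1"] by simp
qed

lemma J_Jflat_common_base:
  fixes \<alpha> u :: real
  assumes "0 < \<alpha>" "\<alpha> < 1"
  defines "p \<equiv> 1 / (2 * (1 - \<alpha>))"
    and "y \<equiv> (if \<alpha> < 1/2 then (1 - \<alpha>)^2 / (2 * \<alpha>) else (1 - \<alpha>)^2) * u"
  shows "J \<alpha> u = 1 / (\<alpha> * (\<alpha> - 1)) * (pos_part (1 - p * y) powr \<alpha> - 1)"
    and "Jflat \<alpha> u = 1 / (\<alpha> * (\<alpha> - 1)) * ((pos_part (1 - y) powr p) powr \<alpha> - 1)"
proof -
  have "p * y = (if \<alpha> < 1/2 then (1 - \<alpha>) / (4 * \<alpha>) else (1 - \<alpha>) / 2) * u"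
    using assms by (simp add: p_def y_def field_simps power2_eq_square)
  then show "J \<alpha> u = 1 / (\<alpha> * (\<alpha> - 1)) * (pos_part (1 - p * y) powr \<alpha> - 1)"
    by (simp add: J_def)
  show "Jflat \<alpha> u = 1 / (\<alpha> * (\<alpha> - 1)) * ((pos_part (1 - y) powr p) powr \<alpha> - 1)"
    by (simp add: Jflat_def powr_powr p_def y_def)
qed

theorem lemmaB1:
  shows "(\<forall>\<alpha>::real. 1/2 \<le> \<alpha> \<and> \<alpha> < 1 \<longrightarrow> (\<forall>u::real. u \<ge> 0 \<longrightarrow> Jflat \<alpha> u \<le> J \<alpha> u))
       \<and> (\<forall>\<alpha>::real. 0 < \<alpha> \<and> \<alpha> < 1/2 \<longrightarrow> (\<forall>u::real. u \<ge> 0 \<longrightarrow> J \<alpha> u \<le> Jflat \<alpha> u))"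
proof (intro conjI allI impI; elim conjE)
  fix \<alpha> u :: real
  define p where "p = 1 / (2 * (1 - \<alpha>))"
  define y where "y = (if \<alpha> < 1/2 then (1 - \<alpha>)^2 / (2 * \<alpha>) else (1 - \<alpha>)^2) * u"
  note base = J_Jflat_common_base[of \<alpha> u, folded p_def y_def]
  {
    assume "1/2 \<le> \<alpha>" "\<alpha> < 1" "0 \<le> u"
    then have "0 < \<alpha>" "1 \<le> p" "0 \<le> y"
      by (simp_all add: p_def y_def field_simps)
    then have "pos_part (1 - p * y) \<le> pos_part (1 - y) powr p"
      by (intro Bernoulli_le_pos_part_powr) auto
    with \<open>0 < \<alpha>\<close> \<open>\<alpha> < 1\<close> show "Jflat \<alpha> u \<le> J \<alpha> u"
      unfolding base[OF \<open>0 < \<alpha>\<close> \<open>\<alpha> < 1\<close>] by (intro powr_minus_one_div_antimono) (auto simp: pos_part_def)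
  next
    assume "0 < \<alpha>" "\<alpha> < 1/2" "0 \<le> u"
    then have "\<alpha> < 1" "0 \<le> p" "p \<le> 1"
      by (simp_all add: p_def field_simps)
    then have "pos_part (1 - y) powr p \<le> pos_part (1 - p * y)"
      by (intro pos_part_powr_le_Bernoulli) auto
    with \<open>0 < \<alpha>\<close> \<open>\<alpha> < 1\<close> show "J \<alpha> u \<le> Jflat \<alpha> u"
      unfolding base[OF \<open>0 < \<alpha>\<close> \<open>\<alpha> < 1\<close>] by (intro powr_minus_one_div_antimono) auto
  }
qed

end
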